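(* Let $A$ be a lattice with finite generating set $X$, let $P$ be a finite partial lattice, $n\in\mathbb N$, $S:=P^{(\vee\wedge)^n\vee}$, and let $g\colon A\to F(P)$ be a lattice homomorphism. Assume that the sublattice $g(A)$ satisfies Dean's condition (D) for the generating set $g(X)$ and that $g(X)\subseteq S$. Then $g$ is lower bounded if and only if the composition $f\circ g\colon A\to(S,\inf,\vee)$ with the standard homomorphism $f$ is lower bounded.
   Context: A partial lattice $P$ is a set with partially defined finite joins and meets; $F(P)$ is the lattice freely generated by $P$ (generated by $P$, and every map from $P$ into a lattice preserving the defined joins and meets extends uniquely to a homomorphism on $F(P)$). For $W\subseteq F(P)$ let $W^\vee:=\{\bigvee U: U\subseteq W\text{ finite}\}$ and $W^\wedge:=\{\bigwedge U:U\subseteq W\text{ finite}\}$, computed in $F(P)$, with $\bigvee\emptyset:=\bigwedge P$; $P^{(\vee\wedge)^n\vee}$ is obtained from $P$ by applying $(\cdot)^\vee$ then $(\cdot)^\wedge$, $n$ times, followed by one more $(\cdot)^\vee$. $S$ is a finite join-subsemilattice of $F(P)$ with least element $\bigwedge P$, so any $a,b\in S$ have an infimum $\inf(a,b)$ in $S$, and $(S,\inf,\vee)$ is a finite lattice. The standard homomorphism is $f\colon F(P)\to S$, $f(d)=\bigvee\{w\in S: w\le d\}$; it is known to be a lower bounded lattice epimorphism onto $(S,\inf,\vee)$ with $f(d)=d$ for $d\in S$. A lattice homomorphism $g\colon A\to L$ is lower bounded if for every $d\in L$ the set $\{x\in A: g(x)\ge d\}$ is empty or has a least element. Dean's condition (D)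 for a lattice $D$ with finite generating set $Q$: for all finite $S',T\subseteq D$ with $\bigwedge S'\le\bigvee T$, either some $s\in S'$ has $s\le\bigvee T$, or some $t\in T$ has $\bigwedge S'\le t$, or some $q\in Q$ has $\bigwedge S'\le q\le\bigvee T$. *)

theory Defs
  imports Main
begin

text \<open>A partial lattice on the (carrier) set P: jn U a means that the join of the finite
nonempty subset U of P is defined and equals a; mt U a likewise for meets.\<close>

definition partial_lattice :: "'p set \<Rightarrow> ('p set \<Rightarrow> 'p \<Rightarrow> bool) \<Rightarrow> ('p set \<Rightarrow> 'p \<Rightarrow> bool) \<Rightarrow> bool" where
  "partial_lattice P jn mt \<longleftrightarrow>
     (\<forall>U a. jn U a \<longrightarrow> finite U \<and> U \<noteq> {} \<and> U \<subseteq> P \<and> a \<in> P) \<and>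
     (\<forall>U a. mt U a \<longrightarrow> finite U \<and> U \<noteq> {} \<and> U \<subseteq> P \<and> a \<in> P) \<and>
     (\<exists>le :: 'p \<Rightarrow> 'p \<Rightarrow> bool.
        (\<forall>x\<in>P. le x x) \<and>
        (\<forall>x\<in>P. \<forall>y\<in>P. le x y \<and> le y x \<longrightarrow> x = y) \<and>
        (\<forall>x\<in>P. \<forall>y\<in>P. \<forall>z\<in>P. le x y \<and> le y z \<longrightarrow> le x z) \<and>
        (\<forall>U a. jn U a \<longrightarrow> (\<forall>u\<in>U. le u a) \<and> (\<forall>b\<in>P. (\<forall>u\<in>U. le u b) \<longrightarrow> le a b)) \<and>
        (\<forall>U a. mt U a \<longrightarrow> (\<forall>u\<in>U. le a u) \<and> (\<forall>b\<in>P. (\<forall>u\<in>U. le b u) \<longrightarrow> le b a)))"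

datatype 'p lterm = Gen 'p | Jn "'p lterm" "'p lterm" | Mt "'p lterm" "'p lterm"

text \<open>The least preorder on lattice terms over P that satisfies the lattice laws and
makes all defined joins and meets of P hold (presentation of F(P)).\<close>

inductive fle :: "'p set \<Rightarrow> ('p set \<Rightarrow> 'p \<Rightarrow> bool) \<Rightarrow> ('p set \<Rightarrow> 'p \<Rightarrow> bool)
                   \<Rightarrow> 'p lterm \<Rightarrow> 'p lterm \<Rightarrow> bool"
  for P jn mt where
  refl: "set_lterm s \<subseteq> P \<Longrightarrow> fle P jn mt s s"
| trans: "fle P jn mt s t \<Longrightarrow> fle P jn mt t u \<Longrightarrow> fle P jn mt s u"
| jn_upper1: "set_lterm s \<subseteq> P \<Longrightarrow> set_lterm t \<subseteq> P \<Longrightarrow> fle P jn mt s (Jn s t)"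
| jn_upper2: "set_lterm s \<subseteq> P \<Longrightarrow> set_lterm t \<subseteq> P \<Longrightarrow> fle P jn mt t (Jn s t)"
| jn_least: "fle P jn mt s u \<Longrightarrow> fle P jn mt t u \<Longrightarrow> fle P jn mt (Jn s t) u"
| mt_lower1: "set_lterm s \<subseteq> P \<Longrightarrow> set_lterm t \<subseteq> P \<Longrightarrow> fle P jn mt (Mt s t) s"
| mt_lower2: "set_lterm s \<subseteq> P \<Longrightarrow> set_lterm t \<subseteq> P \<Longrightarrow> fle P jn mt (Mt s t) t"
| mt_greatest: "fle P jn mt u s \<Longrightarrow> fle P jn mt u t \<Longrightarrow> fle P jn mt u (Mt s t)"
| pj_upper: "jn U a \<Longrightarrow> u \<in> U \<Longrightarrow> fle P jn mt (Gen u) (Gen a)"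
| pj_least: "jn U a \<Longrightarrow> set_lterm t \<subseteq> P \<Longrightarrow> (\<forall>u\<in>U. fle P jn mt (Gen u) t) \<Longrightarrow> fle P jn mt (Gen a) t"
| pm_lower: "mt U a \<Longrightarrow> u \<in> U \<Longrightarrow> fle P jn mt (Gen a) (Gen u)"
| pm_greatest: "mt U a \<Longrightarrow> set_lterm t \<subseteq> P \<Longrightarrow> (\<forall>u\<in>U. fle P jn mt t (Gen u)) \<Longrightarrow> fle P jn mt t (Gen a)"

text \<open>Elements of F(P) are the equivalence classes of terms over P.\<close>

definition fcls :: "'p set \<Rightarrow> ('p set \<Rightarrow> 'p \<Rightarrow> bool) \<Rightarrow> ('p set \<Rightarrow> 'p \<Rightarrow> bool) \<Rightarrow> 'p lterm \<Rightarrow> 'p lterm set" where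
  "fcls P jn mt s = {t. set_lterm t \<subseteq> P \<and> fle P jn mt s t \<and> fle P jn mt t s}"

definition FC :: "'p set \<Rightarrow> ('p set \<Rightarrow> 'p \<Rightarrow> bool) \<Rightarrow> ('p set \<Rightarrow> 'p \<Rightarrow> bool) \<Rightarrow> 'p lterm set set" where
  "FC P jn mt = fcls P jn mt ` {s. set_lterm s \<subseteq> P}"

definition FLe :: "'p set \<Rightarrow> ('p set \<Rightarrow> 'p \<Rightarrow> bool) \<Rightarrow> ('p set \<Rightarrow> 'p \<Rightarrow> bool) \<Rightarrow> 'p lterm set \<Rightarrow> 'p lterm set \<Rightarrow> bool" where
  "FLe P jn mt x y \<longleftrightarrow> (\<exists>s\<in>x. \<exists>t\<in>y. fle P jn mt s t)"

definition FGen :: "'p set \<Rightarrow> ('p set \<Rightarrow> 'p \<Rightarrow> bool) \<Rightarrow> ('p set \<Rightarrow> 'p \<Rightarrow> bool) \<Rightarrow> 'p \<Rightarrow> 'p lterm set" where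
  "FGen P jn mt a = fcls P jn mt (Gen a)"

definition is_lub_in :: "'b set \<Rightarrow> ('b \<Rightarrow> 'b \<Rightarrow> bool) \<Rightarrow> 'b set \<Rightarrow> 'b \<Rightarrow> bool" where
  "is_lub_in C le U z \<longleftrightarrow> z \<in> C \<and> (\<forall>u\<in>U. le u z) \<and> (\<forall>w\<in>C. (\<forall>u\<in>U. le u w) \<longrightarrow> le z w)"

definition is_glb_in :: "'b set \<Rightarrow> ('b \<Rightarrow> 'b \<Rightarrow> bool) \<Rightarrow> 'b set \<Rightarrow> 'b \<Rightarrow> bool" where
  "is_glb_in C le U z \<longleftrightarrow> z \<in> C \<and> (\<forall>u\<in>U. le z u) \<and> (\<forall>w\<in>C. (\<forall>u\<in>U. le w u) \<longrightarrow> le w z)"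

definition Sup_in :: "'b set \<Rightarrow> ('b \<Rightarrow> 'b \<Rightarrow> bool) \<Rightarrow> 'b set \<Rightarrow> 'b" where
  "Sup_in C le U = (THE z. is_lub_in C le U z)"

definition Inf_in :: "'b set \<Rightarrow> ('b \<Rightarrow> 'b \<Rightarrow> bool) \<Rightarrow> 'b set \<Rightarrow> 'b" where
  "Inf_in C le U = (THE z. is_glb_in C le U z)"

definition FSup :: "'p set \<Rightarrow> ('p set \<Rightarrow> 'p \<Rightarrow> bool) \<Rightarrow> ('p set \<Rightarrow> 'p \<Rightarrow> bool) \<Rightarrow> 'p lterm set set \<Rightarrow> 'p lterm set" where
  "FSup P jn mt U = Sup_in (FC P jn mt) (FLe P jn mt) U"

definition FInf :: "'p set \<Rightarrow> ('p set \<Rightarrow> 'p \<Rightarrow> bool) \<Rightarrow> ('p set \<Rightarrow> 'p \<Rightarrow> bool) \<Rightarrow> 'p lterm set set \<Rightarrow> 'p lterm set" where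
  "FInf P jn mt U = Inf_in (FC P jn mt) (FLe P jn mt) U"

text \<open>W^\<or>: joins of finite subsets, with the empty join being the meet of P.\<close>
definition jclos :: "'p set \<Rightarrow> ('p set \<Rightarrow> 'p \<Rightarrow> bool) \<Rightarrow> ('p set \<Rightarrow> 'p \<Rightarrow> bool) \<Rightarrow> 'p lterm set set \<Rightarrow> 'p lterm set set" where
  "jclos P jn mt W =
     {if U = {} then FInf P jn mt (FGen P jn mt ` P) else FSup P jn mt U | U. finite U \<and> U \<subseteq> W}"

text \<open>W^\<and>: meets of finite nonempty subsets.\<close>
definition mclos :: "'p set \<Rightarrow> ('p set \<Rightarrow> 'p \<Rightarrow> bool) \<Rightarrow> ('p set \<Rightarrow> 'p \<Rightarrow> bool) \<Rightarrow> 'p lterm set set \<Rightarrow> 'p lterm set set" where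
  "mclos P jn mt W = {FInf P jn mt U | U. finite U \<and> U \<noteq> {} \<and> U \<subseteq> W}"

definition Sn :: "'p set \<Rightarrow> ('p set \<Rightarrow> 'p \<Rightarrow> bool) \<Rightarrow> ('p set \<Rightarrow> 'p \<Rightarrow> bool) \<Rightarrow> nat \<Rightarrow> 'p lterm set set" where
  "Sn P jn mt n = jclos P jn mt (((mclos P jn mt \<circ> jclos P jn mt) ^^ n) (FGen P jn mt ` P))"

definition std_hom :: "'p set \<Rightarrow> ('p set \<Rightarrow> 'p \<Rightarrow> bool) \<Rightarrow> ('p set \<Rightarrow> 'p \<Rightarrow> bool) \<Rightarrow> 'p lterm set set
                        \<Rightarrow> 'p lterm set \<Rightarrow> 'p lterm set" where
  "std_hom P jn mt S d = FSup P jn mt {w \<in> S. FLe P jn mt w d}"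

definition FL_hom :: "'p set \<Rightarrow> ('p set \<Rightarrow> 'p \<Rightarrow> bool) \<Rightarrow> ('p set \<Rightarrow> 'p \<Rightarrow> bool) \<Rightarrow> ('a::lattice \<Rightarrow> 'p lterm set) \<Rightarrow> bool" where
  "FL_hom P jn mt g \<longleftrightarrow> (\<forall>x. g x \<in> FC P jn mt) \<and>
     (\<forall>x y. g (sup x y) = FSup P jn mt {g x, g y}) \<and>
     (\<forall>x y. g (inf x y) = FInf P jn mt {g x, g y})"

definition lower_bounded :: "('a::lattice \<Rightarrow> 'b) \<Rightarrow> 'b set \<Rightarrow> ('b \<Rightarrow> 'b \<Rightarrow> bool) \<Rightarrow> bool" where
  "lower_bounded h C le \<longleftrightarrow>
     (\<forall>d\<in>C. {x. le d (h x)} = {} \<or> (\<exists>m. le d (h m) \<and> (\<forall>x. le d (h x) \<longrightarrow> m \<le> x)))"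

definition dean_FL :: "'p set \<Rightarrow> ('p set \<Rightarrow> 'p \<Rightarrow> bool) \<Rightarrow> ('p set \<Rightarrow> 'p \<Rightarrow> bool)
                        \<Rightarrow> 'p lterm set set \<Rightarrow> 'p lterm set set \<Rightarrow> bool" where
  "dean_FL P jn mt D Q \<longleftrightarrow>
     (\<forall>S' T. finite S' \<and> S' \<noteq> {} \<and> S' \<subseteq> D \<and> finite T \<and> T \<noteq> {} \<and> T \<subseteq> D \<and>
        FLe P jn mt (FInf P jn mt S') (FSup P jn mt T) \<longrightarrow>
          (\<exists>s\<in>S'. FLe P jn mt s (FSup P jn mt T)) \<or>
          (\<exists>t\<in>T. FLe P jn mt (FInf P jn mt S') t) \<or>
          (\<exists>q\<in>Q. FLe P jn mt (FInf P jn mt S') q \<and> FLe P jn mt q (FSup P jn mt T)))"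

inductive_set lat_gen :: "'a::lattice set \<Rightarrow> 'a set" for X where
  base: "x \<in> X \<Longrightarrow> x \<in> lat_gen X"
| sup: "x \<in> lat_gen X \<Longrightarrow> y \<in> lat_gen X \<Longrightarrow> sup x y \<in> lat_gen X"
| inf: "x \<in> lat_gen X \<Longrightarrow> y \<in> lat_gen X \<Longrightarrow> inf x y \<in> lat_gen X"

end

theory Submission
  imports Defs
begin

text \<open>For d in S the standard homomorphism f satisfies d \<le> f(c) iff d \<le> c, so f \<circ> g is lower
  bounded iff g is lower bounded at every d in S; since P \<subseteq> S, this covers the generators.
  Conversely, lower boundedness at the generators spreads to every term d over P: the set of
  x with d \<le> g(x) is a filter of A, and it is enough that it is generated by a finite set.
  For d1 \<squnion> d2 one takes pairwise joins of the finite sets for d1 and d2. For d = d1 \<sqinter> d2,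
  Dean's condition in F(P) relative to P turns d \<le> g(x) \<squnion> g(y) into d1 \<le> g(x \<squnion> y),
  d2 \<le> g(x \<squnion> y), d \<le> g(x), d \<le> g(y) or d \<le> p \<le> g(x \<squnion> y) with p in P; by induction over the
  generation of A from X the filter is then generated by the meets of subsets of the finite set
  consisting of X and the generating sets for d1, d2 and the generators.\<close>

section \<open>Finitely generated filters\<close>

definition has_least_or_empty :: "('a::order \<Rightarrow> bool) \<Rightarrow> bool" where
  "has_least_or_empty Q \<longleftrightarrow> (\<exists>x. Q x) \<longrightarrow> (\<exists>m. Q m \<and> (\<forall>x. Q x \<longrightarrow> m \<le> x))"

definition finitely_based :: "('a::order \<Rightarrow> bool) \<Rightarrow> bool" where
  "finitely_based Q \<longleftrightarrow> (\<exists>Y. finite Y \<and> (\<forall>x. Q x \<longrightarrow> (\<exists>y\<in>Y. y \<le> x \<and> Q y)))"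

lemma lower_bounded_iff_has_least_or_empty:
  "lower_bounded h C le \<longleftrightarrow> (\<forall>d\<in>C. has_least_or_empty (\<lambda>x. le d (h x)))"
  unfolding lower_bounded_def has_least_or_empty_def by blast

lemma finitely_based_if_has_least_or_empty:
  assumes "has_least_or_empty Q"
  shows "finitely_based Q"
proof (cases "\<exists>x. Q x")
  case True
  then obtain m where "Q m" "\<forall>x. Q x \<longrightarrow> m \<le> x"
    using assms unfolding has_least_or_empty_def by blast
  then show ?thesis unfolding finitely_based_def by (intro exI[of _ "{m}"]) auto
next
  case False
  then show ?thesis unfolding finitely_based_def by (intro exI[of _ "{}"]) auto
qed

lemma Inf_fin_closed:
  fixes Z :: "'a::lattice set"
  assumes "finite Z" "Z \<noteq> {}" "\<forall>z\<in>Z. Q z" and inf_closed: "\<And>x y. Q x \<Longrightarrow> Q y \<Longrightarrow> Q (inf x y)"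
  shows "Q (Inf_fin Z)"
  using assms(1-3) by (induction Z rule: finite_ne_induct) (auto intro: inf_closed)

lemma has_least_or_empty_if_finitely_based:
  fixes Q :: "'a::lattice \<Rightarrow> bool"
  assumes "finitely_based Q" and inf_closed: "\<And>x y. Q x \<Longrightarrow> Q y \<Longrightarrow> Q (inf x y)"
  shows "has_least_or_empty Q"
  unfolding has_least_or_empty_def
proof
  assume "\<exists>x. Q x"
  obtain Y where Y: "finite Y" "\<forall>x. Q x \<longrightarrow> (\<exists>y\<in>Y. y \<le> x \<and> Q y)"
    using assms(1) unfolding finitely_based_def by blast
  let ?Z = "{y \<in> Y. Q y}"
  have Z: "finite ?Z" "?Z \<noteq> {}" using Y \<open>\<exists>x. Q x\<close> by auto
  have "Q (Inf_fin ?Z)" using Inf_fin_closed[of ?Z Q] Z inf_closed by blast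
  moreover have "Inf_fin ?Z \<le> x" if "Q x" for x
    using Y(2) that Z(1) Inf_fin.coboundedI order_trans by blast
  ultimately show "\<exists>m. Q m \<and> (\<forall>x. Q x \<longrightarrow> m \<le> x)" by blast
qed

lemma finitely_based_conj:
  fixes Q R :: "'a::lattice \<Rightarrow> bool"
  assumes "mono Q" "mono R" "finitely_based Q" "finitely_based R"
  shows "finitely_based (\<lambda>x. Q x \<and> R x)"
proof -
  obtain Y1 Y2 where Y1: "finite Y1" "\<forall>x. Q x \<longrightarrow> (\<exists>y\<in>Y1. y \<le> x \<and> Q y)"
    and Y2: "finite Y2" "\<forall>x. R x \<longrightarrow> (\<exists>y\<in>Y2. y \<le> x \<and> R y)"
    using assms(3,4) unfolding finitely_based_def by blast
  have "\<exists>y\<in>(\<lambda>(a, b). sup a b) ` (Y1 \<times> Y2). y \<le> x \<and> Q y \<and> R y" if x: "Q x" "R x" for x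
  proof -
    obtain y1 where y1: "y1 \<in> Y1" "y1 \<le> x" "Q y1" using Y1(2) x(1) by blast
    obtain y2 where y2: "y2 \<in> Y2" "y2 \<le> x" "R y2" using Y2(2) x(2) by blast
    have "Q (sup y1 y2)" using monoD[OF assms(1), of y1 "sup y1 y2"] y1(3) by simp
    moreover have "R (sup y1 y2)" using monoD[OF assms(2), of y2 "sup y1 y2"] y2(3) by simp
    moreover have "sup y1 y2 \<in> (\<lambda>(a, b). sup a b) ` (Y1 \<times> Y2)" using y1(1) y2(1) by force
    moreover have "sup y1 y2 \<le> x" using y1(2) y2(2) by simp
    ultimately show ?thesis by meson
  qed
  moreover have "finite ((\<lambda>(a, b). sup a b) ` (Y1 \<times> Y2))" using Y1(1) Y2(1) by simp
  ultimately show ?thesis unfolding finitely_based_def by meson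
qed

lemma inf_in_Inf_fin_subsets:
  fixes B :: "'a::lattice set"
  assumes "finite B"
    and "m1 \<in> Inf_fin ` {Z. Z \<subseteq> B \<and> Z \<noteq> {}}" "m2 \<in> Inf_fin ` {Z. Z \<subseteq> B \<and> Z \<noteq> {}}"
  shows "inf m1 m2 \<in> Inf_fin ` {Z. Z \<subseteq> B \<and> Z \<noteq> {}}"
proof -
  obtain Z1 where Z1: "Z1 \<subseteq> B" "Z1 \<noteq> {}" "m1 = Inf_fin Z1" using assms(2) by blast
  obtain Z2 where Z2: "Z2 \<subseteq> B" "Z2 \<noteq> {}" "m2 = Inf_fin Z2" using assms(3) by blast
  have "finite Z1" "finite Z2" using Z1(1) Z2(1) assms(1) finite_subset by auto
  then have "inf m1 m2 = Inf_fin (Z1 \<union> Z2)" using Z1 Z2 by (simp add: Inf_fin.union)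
  moreover have "Z1 \<union> Z2 \<subseteq> B" "Z1 \<union> Z2 \<noteq> {}" using Z1 Z2 by auto
  ultimately show ?thesis by blast
qed

lemma finitely_based_if_join_split:
  fixes Q :: "'a::lattice \<Rightarrow> bool"
  assumes gen: "lat_gen X = UNIV" and B: "finite B" "X \<subseteq> B"
    and mono: "mono Q" and inf_closed: "\<And>x y. Q x \<Longrightarrow> Q y \<Longrightarrow> Q (inf x y)"
    and split: "\<And>x y. Q (sup x y) \<Longrightarrow> Q x \<or> Q y \<or> (\<exists>b\<in>B. b \<le> sup x y \<and> Q b)"
  shows "finitely_based Q"
proof -
  let ?M = "Inf_fin ` {Z. Z \<subseteq> B \<and> Z \<noteq> {}}"
  have M_B: "b \<in> ?M" if "b \<in> B" for b
    using that by (intro image_eqI[of _ _ "{b}"]) auto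
  have M_below: "\<exists>m\<in>?M. m \<le> x \<and> Q m" if "x \<in> lat_gen X" "Q x" for x
    using that
  proof (induction x rule: lat_gen.induct)
    case (base x)
    then show ?case using B(2) M_B by blast
  next
    case (sup x y)
    consider "Q x" | "Q y" | b where "b \<in> B" "b \<le> sup x y" "Q b"
      using split[OF sup.prems] by blast
    then show ?case
    proof cases
      case 1
      then obtain m where "m \<in> ?M" "m \<le> x" "Q m" using sup.IH(1) by blast
      moreover have "x \<le> sup x y" by simp
      ultimately show ?thesis by (meson order_trans)
    next
      case 2
      then obtain m where "m \<in> ?M" "m \<le> y" "Q m" using sup.IH(2) by blast
      moreover have "y \<le> sup x y" by simp
      ultimately show ?thesis by (meson order_trans)
    next
      case 3
      then show ?thesis using M_B by blast
    qed
  next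
    case (inf x y)
    have "Q x" "Q y"
      using inf.prems monoD[OF mono, of "inf x y" x] monoD[OF mono, of "inf x y" y] by auto
    then obtain m1 m2 where m: "m1 \<in> ?M" "m1 \<le> x" "Q m1" "m2 \<in> ?M" "m2 \<le> y" "Q m2"
      using inf.IH by meson
    have "inf m1 m2 \<le> inf x y" using m(2,5) by (rule inf_mono)
    then show ?case using inf_in_Inf_fin_subsets[OF B(1) m(1,4)] inf_closed[OF m(3,6)] by blast
  qed
  have "finite ?M" using B(1) by simp
  then show ?thesis unfolding finitely_based_def using M_below by (intro exI[of _ ?M]) (simp add: gen)
qed

section \<open>Dean's condition in F(P)\<close>

lemma partial_lattice_jn_in: "partial_lattice P jn mt \<Longrightarrow> jn U a \<Longrightarrow> U \<subseteq> P \<and> a \<in> P"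
  unfolding partial_lattice_def by (elim conjE) simp

lemma partial_lattice_mt_in: "partial_lattice P jn mt \<Longrightarrow> mt U a \<Longrightarrow> U \<subseteq> P \<and> a \<in> P"
  unfolding partial_lattice_def by (elim conjE) simp

text \<open>Dean's condition for F(P) relative to P is proved as Whitman's condition is for free
  lattices: if no generator lies in the interval [u, v], evaluating terms in the two-element
  lattice, recursively inside [u, v] and by the test u \<le> t outside, is monotone for the order
  of F(P), yet it separates u = d1 \<sqinter> d2 from v = b1 \<squnion> b2 unless one of the cases of (D) holds.\<close>

fun interval_test :: "('p lterm \<Rightarrow> 'p lterm \<Rightarrow> bool) \<Rightarrow> 'p lterm \<Rightarrow> 'p lterm \<Rightarrow> 'p lterm \<Rightarrow> bool" where
  "interval_test le u v (Gen p) = (le u (Gen p) \<and> \<not> le (Gen p) v)"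
| "interval_test le u v (Jn s t) =
     (if le u (Jn s t) \<and> le (Jn s t) v then interval_test le u v s \<or> interval_test le u v t
      else le u (Jn s t))"
| "interval_test le u v (Mt s t) =
     (if le u (Mt s t) \<and> le (Mt s t) v then interval_test le u v s \<and> interval_test le u v t
      else le u (Mt s t))"

lemma interval_test_le: "interval_test le u v t \<Longrightarrow> le u t"
  by (cases t) (auto split: if_splits)

lemma interval_test_outside: "\<not> (le u t \<and> le t v) \<Longrightarrow> interval_test le u v t = le u t"
  by (cases t) auto

lemma interval_test_upward:
  assumes "interval_test (fle P jn mt) u v s" "\<not> fle P jn mt s v" "fle P jn mt s t"
  shows "interval_test (fle P jn mt) u v t"
proof -
  have "fle P jn mt u t" using interval_test_le[OF assms(1)] assms(3) by (rule fle.trans)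
  moreover have "\<not> fle P jn mt t v" using assms(2,3) fle.trans by blast
  ultimately show ?thesis by (simp add: interval_test_outside)
qed

lemma interval_test_mono:
  assumes "fle P jn mt s t" and PL: "partial_lattice P jn mt"
    and no_gen: "\<forall>p\<in>P. \<not> (fle P jn mt u (Gen p) \<and> fle P jn mt (Gen p) v)"
    and "interval_test (fle P jn mt) u v s"
  shows "interval_test (fle P jn mt) u v t"
  using assms(1,4)
proof (induction rule: fle.induct)
  case (trans s t w)
  then show ?case by blast
next
  case (jn_upper1 s t)
  show ?case
    using fle.trans[OF interval_test_le[OF jn_upper1.prems] fle.jn_upper1[OF jn_upper1.hyps]]
      jn_upper1.prems by simp
next
  case (jn_upper2 s t)
  show ?case
    using fle.trans[OF interval_test_le[OF jn_upper2.prems] fle.jn_upper2[OF jn_upper2.hyps]]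
      jn_upper2.prems by simp
next
  case (jn_least s w t)
  show ?case
    using interval_test_upward[OF jn_least.prems _ fle.jn_least[OF jn_least.hyps]]
      interval_test_le[OF jn_least.prems] jn_least.prems jn_least.IH
    by (cases "fle P jn mt (Jn s t) v") auto
next
  case (mt_lower1 s t)
  show ?case
    using interval_test_upward[OF mt_lower1.prems _ fle.mt_lower1[OF mt_lower1.hyps]]
      interval_test_le[OF mt_lower1.prems] mt_lower1.prems
    by (cases "fle P jn mt (Mt s t) v") auto
next
  case (mt_lower2 s t)
  show ?case
    using interval_test_upward[OF mt_lower2.prems _ fle.mt_lower2[OF mt_lower2.hyps]]
      interval_test_le[OF mt_lower2.prems] mt_lower2.prems
    by (cases "fle P jn mt (Mt s t) v") auto
next
  case (mt_greatest w s t)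
  show ?case
    using fle.trans[OF interval_test_le[OF mt_greatest.prems] fle.mt_greatest[OF mt_greatest.hyps]]
      mt_greatest.IH mt_greatest.prems by simp
next
  case (pj_upper U a x)
  have "fle P jn mt (Gen x) (Gen a)" using pj_upper.hyps by (rule fle.pj_upper)
  then show ?case
    using fle.trans[OF interval_test_le[OF pj_upper.prems]] no_gen partial_lattice_jn_in[OF PL pj_upper.hyps(1)]
    by simp
next
  case (pj_least U a t)
  have "fle P jn mt (Gen a) t" using pj_least.hyps pj_least.IH by (blast intro: fle.pj_least)
  then show ?case
    using interval_test_upward[OF pj_least.prems] interval_test_le[OF pj_least.prems]
      no_gen partial_lattice_jn_in[OF PL pj_least.hyps(1)] by simp
next
  case (pm_lower U a x)
  have "fle P jn mt (Gen a) (Gen x)" using pm_lower.hyps by (rule fle.pm_lower)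
  then show ?case
    using fle.trans[OF interval_test_le[OF pm_lower.prems]] no_gen partial_lattice_mt_in[OF PL pm_lower.hyps(1)]
      pm_lower.hyps(2) by auto
next
  case (pm_greatest U a t)
  have "fle P jn mt t (Gen a)" using pm_greatest.hyps pm_greatest.IH by (blast intro: fle.pm_greatest)
  then show ?case
    using fle.trans[OF interval_test_le[OF pm_greatest.prems]] no_gen partial_lattice_mt_in[OF PL pm_greatest.hyps(1)]
    by simp
qed simp

lemma fle_Mt_Jn_dean:
  assumes PL: "partial_lattice P jn mt"
    and sets: "set_lterm d1 \<subseteq> P" "set_lterm d2 \<subseteq> P" "set_lterm b1 \<subseteq> P" "set_lterm b2 \<subseteq> P"
    and le: "fle P jn mt (Mt d1 d2) (Jn b1 b2)"
  shows "fle P jn mt d1 (Jn b1 b2) \<or> fle P jn mt d2 (Jn b1 b2)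
    \<or> fle P jn mt (Mt d1 d2) b1 \<or> fle P jn mt (Mt d1 d2) b2
    \<or> (\<exists>p\<in>P. fle P jn mt (Mt d1 d2) (Gen p) \<and> fle P jn mt (Gen p) (Jn b1 b2))"
proof (rule ccontr)
  let ?le = "fle P jn mt" and ?u = "Mt d1 d2" and ?v = "Jn b1 b2"
  assume "\<not> ?thesis"
  then have no: "\<not> ?le d1 ?v" "\<not> ?le d2 ?v" "\<not> ?le ?u b1" "\<not> ?le ?u b2"
     "\<forall>p\<in>P. \<not> (?le ?u (Gen p) \<and> ?le (Gen p) ?v)" by auto
  have "?le ?u d1" "?le ?u d2" using sets(1,2) by (rule fle.mt_lower1, rule fle.mt_lower2)
  moreover have "?le ?u ?u" "?le ?v ?v" using sets by (simp_all add: fle.refl)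
  ultimately have "interval_test ?le ?u ?v ?u" and "\<not> interval_test ?le ?u ?v ?v"
    using le no(1-4) by (simp_all add: interval_test_outside)
  then show False using interval_test_mono[OF le PL no(5)] by blast
qed

section \<open>Joins and meets in F(P)\<close>

lemma Sup_in_eqI:
  assumes "\<And>x y. x \<in> C \<Longrightarrow> y \<in> C \<Longrightarrow> le x y \<Longrightarrow> le y x \<Longrightarrow> x = y" "is_lub_in C le U z"
  shows "Sup_in C le U = z"
  unfolding Sup_in_def
proof (rule the_equality)
  show "is_lub_in C le U z" by fact
  fix z' assume "is_lub_in C le U z'"
  with assms show "z' = z" unfolding is_lub_in_def by blast
qed

lemma Inf_in_eqI:
  assumes "\<And>x y. x \<in> C \<Longrightarrow> y \<in> C \<Longrightarrow> le x y \<Longrightarrow> le y x \<Longrightarrow> x = y" "is_glb_in C le U z"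
  shows "Inf_in C le U = z"
  unfolding Inf_in_def
proof (rule the_equality)
  show "is_glb_in C le U z" by fact
  fix z' assume "is_glb_in C le U z'"
  with assms show "z' = z" unfolding is_glb_in_def by blast
qed

lemma is_lub_in_insert:
  assumes "transp_on C le" "V \<subseteq> C" "is_lub_in C le V z" "is_lub_in C le {c, z} w"
  shows "is_lub_in C le (insert c V) w"
  unfolding is_lub_in_def
proof (intro conjI ballI impI)
  have z: "z \<in> C" "\<forall>x\<in>V. le x z" "\<forall>q\<in>C. (\<forall>x\<in>V. le x q) \<longrightarrow> le z q"
    using assms(3) unfolding is_lub_in_def by auto
  have w: "w \<in> C" "le c w" "le z w" "\<forall>q\<in>C. le c q \<and> le z q \<longrightarrow> le w q"
    using assms(4) unfolding is_lub_in_def by auto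
  show "w \<in> C" by (fact w(1))
  show "le x w" if "x \<in> insert c V" for x
  proof (cases "x = c")
    case False
    then have "x \<in> C" "le x z" using that z(2) assms(2) by auto
    then show ?thesis using transp_onD[OF assms(1) _ z(1) w(1) _ w(3)] by blast
  qed (use w(2) in simp)
  show "le w q" if "q \<in> C" "\<forall>x\<in>insert c V. le x q" for q
    using that w(4) z(3) by blast
qed

lemma is_glb_in_iff_is_lub_in_conversep: "is_glb_in C le V z \<longleftrightarrow> is_lub_in C le\<inverse>\<inverse> V z"
  unfolding is_glb_in_def is_lub_in_def by simp

lemma is_glb_in_insert:
  assumes "transp_on C le" "V \<subseteq> C" "is_glb_in C le V z" "is_glb_in C le {c, z} w"
  shows "is_glb_in C le (insert c V) w"
proof -
  have "transp_on C le\<inverse>\<inverse>" using assms(1) by simp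
  then show ?thesis using assms(2-4) unfolding is_glb_in_iff_is_lub_in_conversep by (rule is_lub_in_insert)
qed

lemma set_lterm_nonempty: "set_lterm t \<noteq> {}"
  by (induction t) auto

lemma mem_fcls: "set_lterm s \<subseteq> P \<Longrightarrow> s \<in> fcls P jn mt s"
  by (auto simp: fcls_def intro: fle.refl)

lemma FLe_fcls_iff:
  assumes "set_lterm s \<subseteq> P" "set_lterm t \<subseteq> P"
  shows "FLe P jn mt (fcls P jn mt s) (fcls P jn mt t) \<longleftrightarrow> fle P jn mt s t"
proof
  assume "FLe P jn mt (fcls P jn mt s) (fcls P jn mt t)"
  then obtain s' t' where "fle P jn mt s s'" "fle P jn mt s' t'" "fle P jn mt t' t"
    unfolding FLe_def fcls_def by blast
  then show "fle P jn mt s t" by (meson fle.trans)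
next
  assume "fle P jn mt s t"
  then show "FLe P jn mt (fcls P jn mt s) (fcls P jn mt t)"
    unfolding FLe_def using mem_fcls assms by blast
qed

lemma fcls_eq_iff:
  assumes "set_lterm s \<subseteq> P" "set_lterm t \<subseteq> P"
  shows "fcls P jn mt s = fcls P jn mt t \<longleftrightarrow> fle P jn mt s t \<and> fle P jn mt t s"
proof
  assume "fcls P jn mt s = fcls P jn mt t"
  then have "s \<in> fcls P jn mt t" using mem_fcls[of s P jn mt] assms(1) by simp
  then show "fle P jn mt s t \<and> fle P jn mt t s" by (simp add: fcls_def)
next
  assume "fle P jn mt s t \<and> fle P jn mt t s"
  then show "fcls P jn mt s = fcls P jn mt t"
    unfolding fcls_def by (blast intro: fle.trans)
qed

lemma FC_cases:
  assumes "c \<in> FC P jn mt"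
  obtains s where "set_lterm s \<subseteq> P" "c = fcls P jn mt s"
  using assms by (auto simp: FC_def)

lemma fcls_in_FC: "set_lterm s \<subseteq> P \<Longrightarrow> fcls P jn mt s \<in> FC P jn mt"
  by (auto simp: FC_def)

lemma FGen_in_FC: "p \<in> P \<Longrightarrow> FGen P jn mt p \<in> FC P jn mt"
  unfolding FGen_def by (rule fcls_in_FC) simp

lemma FLe_refl:
  assumes "x \<in> FC P jn mt"
  shows "FLe P jn mt x x"
proof -
  obtain s where "set_lterm s \<subseteq> P" "x = fcls P jn mt s" using assms by (rule FC_cases)
  then show ?thesis by (simp add: FLe_fcls_iff fle.refl)
qed

lemma FLe_trans:
  assumes "x \<in> FC P jn mt" "y \<in> FC P jn mt" "z \<in> FC P jn mt"
    and "FLe P jn mt x y" "FLe P jn mt y z"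
  shows "FLe P jn mt x z"
proof -
  obtain s where s: "set_lterm s \<subseteq> P" "x = fcls P jn mt s" using assms(1) by (rule FC_cases)
  obtain t where t: "set_lterm t \<subseteq> P" "y = fcls P jn mt t" using assms(2) by (rule FC_cases)
  obtain u where u: "set_lterm u \<subseteq> P" "z = fcls P jn mt u" using assms(3) by (rule FC_cases)
  have "fle P jn mt s t" "fle P jn mt t u" using assms(4,5) s t u by (simp_all add: FLe_fcls_iff)
  then show ?thesis using s u by (simp add: FLe_fcls_iff fle.trans)
qed

lemma FLe_antisym:
  assumes "x \<in> FC P jn mt" "y \<in> FC P jn mt" "FLe P jn mt x y" "FLe P jn mt y x"
  shows "x = y"
proof -
  obtain s where s: "set_lterm s \<subseteq> P" "x = fcls P jn mt s" using assms(1) by (rule FC_cases)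
  obtain t where t: "set_lterm t \<subseteq> P" "y = fcls P jn mt t" using assms(2) by (rule FC_cases)
  show ?thesis using assms(3,4) s t by (simp add: FLe_fcls_iff fcls_eq_iff)
qed

lemma transp_on_FLe: "transp_on (FC P jn mt) (FLe P jn mt)"
  unfolding transp_on_def using FLe_trans by blast

lemma is_lub_pair_fcls:
  assumes "set_lterm s \<subseteq> P" "set_lterm t \<subseteq> P"
  shows "is_lub_in (FC P jn mt) (FLe P jn mt) {fcls P jn mt s, fcls P jn mt t} (fcls P jn mt (Jn s t))"
proof -
  have st: "set_lterm (Jn s t) \<subseteq> P" using assms by simp
  have "FLe P jn mt (fcls P jn mt (Jn s t)) w"
    if "w \<in> FC P jn mt" "FLe P jn mt (fcls P jn mt s) w" "FLe P jn mt (fcls P jn mt t) w" for w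
    using that(1)
  proof (rule FC_cases)
    fix q assume q: "set_lterm q \<subseteq> P" "w = fcls P jn mt q"
    then have "fle P jn mt (Jn s t) q" using that(2,3) assms by (simp add: FLe_fcls_iff fle.jn_least)
    then show ?thesis using q st by (simp add: FLe_fcls_iff)
  qed
  moreover have "FLe P jn mt (fcls P jn mt s) (fcls P jn mt (Jn s t))"
    "FLe P jn mt (fcls P jn mt t) (fcls P jn mt (Jn s t))"
    using assms st by (simp_all add: FLe_fcls_iff fle.jn_upper1 fle.jn_upper2)
  ultimately show ?thesis unfolding is_lub_in_def using fcls_in_FC[OF st] by auto
qed

lemma is_glb_pair_fcls:
  assumes "set_lterm s \<subseteq> P" "set_lterm t \<subseteq> P"
  shows "is_glb_in (FC P jn mt) (FLe P jn mt) {fcls P jn mt s, fcls P jn mt t} (fcls P jn mt (Mt s t))"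
proof -
  have st: "set_lterm (Mt s t) \<subseteq> P" using assms by simp
  have "FLe P jn mt w (fcls P jn mt (Mt s t))"
    if "w \<in> FC P jn mt" "FLe P jn mt w (fcls P jn mt s)" "FLe P jn mt w (fcls P jn mt t)" for w
    using that(1)
  proof (rule FC_cases)
    fix q assume q: "set_lterm q \<subseteq> P" "w = fcls P jn mt q"
    then have "fle P jn mt q (Mt s t)" using that(2,3) assms by (simp add: FLe_fcls_iff fle.mt_greatest)
    then show ?thesis using q st by (simp add: FLe_fcls_iff)
  qed
  moreover have "FLe P jn mt (fcls P jn mt (Mt s t)) (fcls P jn mt s)"
    "FLe P jn mt (fcls P jn mt (Mt s t)) (fcls P jn mt t)"
    using assms st by (simp_all add: FLe_fcls_iff fle.mt_lower1 fle.mt_lower2)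
  ultimately show ?thesis unfolding is_glb_in_def using fcls_in_FC[OF st] by auto
qed

lemma ex_glb_FC:
  assumes "finite V" "V \<noteq> {}" "V \<subseteq> FC P jn mt"
  shows "\<exists>z. is_glb_in (FC P jn mt) (FLe P jn mt) V z"
  using assms
proof (induction V rule: finite_ne_induct)
  case (singleton c)
  then show ?case by (auto simp: is_glb_in_def intro: FLe_refl)
next
  case (insert c V)
  then obtain z where z: "is_glb_in (FC P jn mt) (FLe P jn mt) V z" by auto
  then have "z \<in> FC P jn mt" unfolding is_glb_in_def by blast
  then obtain t where t: "set_lterm t \<subseteq> P" "z = fcls P jn mt t" by (rule FC_cases)
  obtain s where s: "set_lterm s \<subseteq> P" "c = fcls P jn mt s" using insert.prems by (auto elim: FC_cases)
  have "is_glb_in (FC P jn mt) (FLe P jn mt) {c, z} (fcls P jn mt (Mt s t))"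
    using is_glb_pair_fcls[OF s(1) t(1)] s t by simp
  moreover have "V \<subseteq> FC P jn mt" using insert.prems by simp
  ultimately show ?case using is_glb_in_insert[OF transp_on_FLe _ z] by blast
qed

lemma FInf_is_glb:
  assumes "finite V" "V \<noteq> {}" "V \<subseteq> FC P jn mt"
  shows "is_glb_in (FC P jn mt) (FLe P jn mt) V (FInf P jn mt V)"
proof -
  obtain z where z: "is_glb_in (FC P jn mt) (FLe P jn mt) V z" using ex_glb_FC[OF assms] by blast
  have "FInf P jn mt V = z" unfolding FInf_def by (rule Inf_in_eqI[OF FLe_antisym z])
  then show ?thesis using z by simp
qed

lemma ex_bottom_lterm:
  assumes "finite P" "P \<noteq> {}"
  obtains t0 where "set_lterm t0 \<subseteq> P" "\<And>s. set_lterm s \<subseteq> P \<Longrightarrow> fle P jn mt t0 s"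
proof -
  have "is_glb_in (FC P jn mt) (FLe P jn mt) (FGen P jn mt ` P) (FInf P jn mt (FGen P jn mt ` P))"
    using assms by (intro FInf_is_glb) (auto intro: FGen_in_FC)
  then have b: "FInf P jn mt (FGen P jn mt ` P) \<in> FC P jn mt"
    "\<And>p. p \<in> P \<Longrightarrow> FLe P jn mt (FInf P jn mt (FGen P jn mt ` P)) (FGen P jn mt p)"
    unfolding is_glb_in_def by auto
  obtain t0 where t0: "set_lterm t0 \<subseteq> P" "FInf P jn mt (FGen P jn mt ` P) = fcls P jn mt t0"
    using b(1) by (rule FC_cases)
  have "fle P jn mt t0 s" if "set_lterm s \<subseteq> P" for s
    using that
  proof (induction s)
    case (Gen p)
    then show ?case using b(2)[of p] t0 by (simp add: FGen_def FLe_fcls_iff)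
  next
    case (Jn s1 s2)
    then have "fle P jn mt t0 s1" "fle P jn mt s1 (Jn s1 s2)" by (auto intro: fle.jn_upper1)
    then show ?case by (rule fle.trans)
  next
    case (Mt s1 s2)
    then show ?case by (auto intro: fle.mt_greatest)
  qed
  then show ?thesis using t0(1) that by blast
qed

lemma ex_lub_FC:
  assumes "finite P" "P \<noteq> {}" "finite V" "V \<subseteq> FC P jn mt"
  shows "\<exists>z. is_lub_in (FC P jn mt) (FLe P jn mt) V z"
  using assms(3,4)
proof (induction V rule: finite_induct)
  case empty
  obtain t0 where t0: "set_lterm t0 \<subseteq> P" "\<And>s. set_lterm s \<subseteq> P \<Longrightarrow> fle P jn mt t0 s"
    using ex_bottom_lterm[OF assms(1,2)] by blast
  have "FLe P jn mt (fcls P jn mt t0) w" if "w \<in> FC P jn mt" for w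
    using that by (rule FC_cases) (simp add: t0 FLe_fcls_iff)
  then have "is_lub_in (FC P jn mt) (FLe P jn mt) {} (fcls P jn mt t0)"
    unfolding is_lub_in_def using fcls_in_FC[OF t0(1)] by blast
  then show ?case by blast
next
  case (insert c V)
  then obtain z where z: "is_lub_in (FC P jn mt) (FLe P jn mt) V z" by auto
  then have "z \<in> FC P jn mt" unfolding is_lub_in_def by blast
  then obtain t where t: "set_lterm t \<subseteq> P" "z = fcls P jn mt t" by (rule FC_cases)
  obtain s where s: "set_lterm s \<subseteq> P" "c = fcls P jn mt s" using insert.prems by (auto elim: FC_cases)
  have "is_lub_in (FC P jn mt) (FLe P jn mt) {c, z} (fcls P jn mt (Jn s t))"
    using is_lub_pair_fcls[OF s(1) t(1)] s t by simp
  moreover have "V \<subseteq> FC P jn mt" using insert.prems by simp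
  ultimately show ?case using is_lub_in_insert[OF transp_on_FLe _ z] by blast
qed

lemma FSup_is_lub:
  assumes "finite P" "P \<noteq> {}" "finite V" "V \<subseteq> FC P jn mt"
  shows "is_lub_in (FC P jn mt) (FLe P jn mt) V (FSup P jn mt V)"
proof -
  obtain z where z: "is_lub_in (FC P jn mt) (FLe P jn mt) V z" using ex_lub_FC[OF assms] by blast
  have "FSup P jn mt V = z" unfolding FSup_def by (rule Sup_in_eqI[OF FLe_antisym z])
  then show ?thesis using z by simp
qed

lemma FSup_singleton: "c \<in> FC P jn mt \<Longrightarrow> FSup P jn mt {c} = c"
  unfolding FSup_def by (rule Sup_in_eqI[OF FLe_antisym]) (auto simp: is_lub_in_def intro: FLe_refl)

lemma FInf_singleton: "c \<in> FC P jn mt \<Longrightarrow> FInf P jn mt {c} = c"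
  unfolding FInf_def by (rule Inf_in_eqI[OF FLe_antisym]) (auto simp: is_glb_in_def intro: FLe_refl)

lemma FSup_pair_fcls:
  assumes "set_lterm s \<subseteq> P" "set_lterm t \<subseteq> P"
  shows "FSup P jn mt {fcls P jn mt s, fcls P jn mt t} = fcls P jn mt (Jn s t)"
  unfolding FSup_def using FLe_antisym is_lub_pair_fcls[OF assms] by (rule Sup_in_eqI)

lemma FInf_pair_fcls:
  assumes "set_lterm s \<subseteq> P" "set_lterm t \<subseteq> P"
  shows "FInf P jn mt {fcls P jn mt s, fcls P jn mt t} = fcls P jn mt (Mt s t)"
  unfolding FInf_def using FLe_antisym is_glb_pair_fcls[OF assms] by (rule Inf_in_eqI)

section \<open>The sets P^((\<or>\<and>)^n\<or>) and the standard homomorphism\<close>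

lemma finite_jclos: "finite W \<Longrightarrow> finite (jclos P jn mt W)"
proof -
  assume "finite W"
  then have "finite {U. finite U \<and> U \<subseteq> W}" by (simp add: finite_subset[of _ "Pow W"])
  moreover have "jclos P jn mt W =
      (\<lambda>U. if U = {} then FInf P jn mt (FGen P jn mt ` P) else FSup P jn mt U) ` {U. finite U \<and> U \<subseteq> W}"
    unfolding jclos_def by blast
  ultimately show ?thesis by simp
qed

lemma jclos_subset_FC:
  assumes "finite P" "P \<noteq> {}" "W \<subseteq> FC P jn mt"
  shows "jclos P jn mt W \<subseteq> FC P jn mt"
proof
  fix c assume "c \<in> jclos P jn mt W"
  then obtain U where U: "finite U" "U \<subseteq> W"
    and c: "c = (if U = {} then FInf P jn mt (FGen P jn mt ` P) else FSup P jn mt U)"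
    unfolding jclos_def mem_Collect_eq by (elim exE conjE) (rule that)
  have "is_glb_in (FC P jn mt) (FLe P jn mt) (FGen P jn mt ` P) (FInf P jn mt (FGen P jn mt ` P))"
    using assms(1,2) by (intro FInf_is_glb) (auto intro: FGen_in_FC)
  moreover have "is_lub_in (FC P jn mt) (FLe P jn mt) U (FSup P jn mt U)"
    using assms U by (intro FSup_is_lub) auto
  ultimately show "c \<in> FC P jn mt" unfolding c is_glb_in_def is_lub_in_def by simp
qed

lemma subset_jclos:
  assumes "W \<subseteq> FC P jn mt"
  shows "W \<subseteq> jclos P jn mt W"
proof
  fix w assume w: "w \<in> W"
  then have "w = (if {w} = {} then FInf P jn mt (FGen P jn mt ` P) else FSup P jn mt {w})"
    using FSup_singleton[of w P jn mt] assms by auto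
  then show "w \<in> jclos P jn mt W" unfolding jclos_def using w by blast
qed

lemma finite_mclos: "finite W \<Longrightarrow> finite (mclos P jn mt W)"
proof -
  assume "finite W"
  then have "finite {U. finite U \<and> U \<noteq> {} \<and> U \<subseteq> W}" by (simp add: finite_subset[of _ "Pow W"])
  moreover have "mclos P jn mt W = FInf P jn mt ` {U. finite U \<and> U \<noteq> {} \<and> U \<subseteq> W}"
    unfolding mclos_def by blast
  ultimately show ?thesis by simp
qed

lemma mclos_subset_FC:
  assumes "W \<subseteq> FC P jn mt"
  shows "mclos P jn mt W \<subseteq> FC P jn mt"
proof
  fix c assume "c \<in> mclos P jn mt W"
  then obtain U where U: "finite U" "U \<noteq> {}" "U \<subseteq> W" and c: "c = FInf P jn mt U"
    unfolding mclos_def mem_Collect_eq by (elim exE conjE) (rule that)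
  have "is_glb_in (FC P jn mt) (FLe P jn mt) U (FInf P jn mt U)"
    using U assms by (intro FInf_is_glb) auto
  then show "c \<in> FC P jn mt" unfolding c is_glb_in_def by simp
qed

lemma subset_mclos:
  assumes "W \<subseteq> FC P jn mt"
  shows "W \<subseteq> mclos P jn mt W"
proof
  fix w assume w: "w \<in> W"
  then have "w = FInf P jn mt {w}" using FInf_singleton[of w P jn mt] assms by auto
  then show "w \<in> mclos P jn mt W" unfolding mclos_def using w by blast
qed

lemma mclos_jclos_iterate_props:
  assumes "finite P" "P \<noteq> {}"
  shows "finite (((mclos P jn mt \<circ> jclos P jn mt) ^^ k) (FGen P jn mt ` P))
    \<and> ((mclos P jn mt \<circ> jclos P jn mt) ^^ k) (FGen P jn mt ` P) \<subseteq> FC P jn mt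
    \<and> FGen P jn mt ` P \<subseteq> ((mclos P jn mt \<circ> jclos P jn mt) ^^ k) (FGen P jn mt ` P)"
proof (induction k)
  case 0
  then show ?case using assms(1) by (auto intro: FGen_in_FC)
next
  case (Suc k)
  let ?W = "((mclos P jn mt \<circ> jclos P jn mt) ^^ k) (FGen P jn mt ` P)"
  have W: "finite ?W" "?W \<subseteq> FC P jn mt" "FGen P jn mt ` P \<subseteq> ?W"
    using Suc.IH unfolding comp_def by auto
  have J: "finite (jclos P jn mt ?W)" "jclos P jn mt ?W \<subseteq> FC P jn mt"
    using finite_jclos[OF W(1)] jclos_subset_FC[OF assms W(2)] .
  have "FGen P jn mt ` P \<subseteq> mclos P jn mt (jclos P jn mt ?W)"
    using W(3) subset_trans[OF subset_jclos[OF W(2)] subset_mclos[OF J(2)]] by (rule subset_trans)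
  moreover have "((mclos P jn mt \<circ> jclos P jn mt) ^^ Suc k) (FGen P jn mt ` P)
      = mclos P jn mt (jclos P jn mt ?W)" by simp
  ultimately show ?case using finite_mclos[OF J(1)] mclos_subset_FC[OF J(2)] by (simp only:)
qed

lemma Sn_props:
  assumes "finite P" "P \<noteq> {}"
  shows "finite (Sn P jn mt n)" "Sn P jn mt n \<subseteq> FC P jn mt" "FGen P jn mt ` P \<subseteq> Sn P jn mt n"
proof -
  let ?W = "((mclos P jn mt \<circ> jclos P jn mt) ^^ n) (FGen P jn mt ` P)"
  have W: "finite ?W" "?W \<subseteq> FC P jn mt" "FGen P jn mt ` P \<subseteq> ?W"
    using mclos_jclos_iterate_props[OF assms, where k = n] by auto
  show "finite (Sn P jn mt n)" unfolding Sn_def using W(1) by (rule finite_jclos)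
  show "Sn P jn mt n \<subseteq> FC P jn mt" unfolding Sn_def using W(2) by (rule jclos_subset_FC[OF assms])
  show "FGen P jn mt ` P \<subseteq> Sn P jn mt n" unfolding Sn_def using W(3) subset_jclos[OF W(2)] by (rule subset_trans)
qed

lemma FLe_std_hom_iff:
  assumes "finite P" "P \<noteq> {}" "finite S" "S \<subseteq> FC P jn mt" "d \<in> S" "c \<in> FC P jn mt"
  shows "FLe P jn mt d (std_hom P jn mt S c) \<longleftrightarrow> FLe P jn mt d c"
proof
  have lub: "is_lub_in (FC P jn mt) (FLe P jn mt) {w \<in> S. FLe P jn mt w c} (std_hom P jn mt S c)"
    unfolding std_hom_def using assms(1-4) by (intro FSup_is_lub) auto
  then have below: "FLe P jn mt (std_hom P jn mt S c) c" and "std_hom P jn mt S c \<in> FC P jn mt"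
    using assms(6) unfolding is_lub_in_def by auto
  show "FLe P jn mt d c" if "FLe P jn mt d (std_hom P jn mt S c)"
    using FLe_trans[OF _ \<open>std_hom P jn mt S c \<in> FC P jn mt\<close> assms(6) that below] assms(4,5) by blast
  show "FLe P jn mt d (std_hom P jn mt S c)" if "FLe P jn mt d c"
    using lub that assms(5) unfolding is_lub_in_def by blast
qed

section \<open>Lower boundedness\<close>

lemma fle_Jn_left_iff:
  assumes "set_lterm s \<subseteq> P" "set_lterm t \<subseteq> P"
  shows "fle P jn mt (Jn s t) u \<longleftrightarrow> fle P jn mt s u \<and> fle P jn mt t u"
proof
  assume "fle P jn mt (Jn s t) u"
  then show "fle P jn mt s u \<and> fle P jn mt t u"
    using fle.trans[OF fle.jn_upper1[OF assms]] fle.trans[OF fle.jn_upper2[OF assms]] by blast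
qed (blast intro: fle.jn_least)

locale fle_hom =
  fixes P :: "'p set" and jn mt :: "'p set \<Rightarrow> 'p \<Rightarrow> bool" and r :: "'a::lattice \<Rightarrow> 'p lterm"
  assumes r_in: "set_lterm (r x) \<subseteq> P"
    and r_sup: "fle P jn mt (r (sup x y)) (Jn (r x) (r y))" "fle P jn mt (Jn (r x) (r y)) (r (sup x y))"
    and r_inf: "fle P jn mt (r (inf x y)) (Mt (r x) (r y))" "fle P jn mt (Mt (r x) (r y)) (r (inf x y))"
begin

lemma fle_r_mono:
  assumes "x \<le> y"
  shows "fle P jn mt (r x) (r y)"
proof -
  have "fle P jn mt (r x) (Jn (r x) (r y))" using r_in by (intro fle.jn_upper1)
  then have "fle P jn mt (r x) (r (sup x y))" using r_sup(2) by (rule fle.trans)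
  then show ?thesis using assms by (simp add: sup_absorb2)
qed

lemma mono_fle_r: "mono (\<lambda>x. fle P jn mt d (r x))"
proof (intro monoI le_boolI)
  fix x y :: 'a
  assume "x \<le> y" "fle P jn mt d (r x)"
  then show "fle P jn mt d (r y)" using fle.trans fle_r_mono by metis
qed

lemma fle_r_inf: "fle P jn mt d (r x) \<Longrightarrow> fle P jn mt d (r y) \<Longrightarrow> fle P jn mt d (r (inf x y))"
  by (rule fle.trans[OF fle.mt_greatest r_inf(2)])

lemma fle_r_sup: "fle P jn mt d (r (sup x y)) \<Longrightarrow> fle P jn mt d (Jn (r x) (r y))"
  by (rule fle.trans[OF _ r_sup(1)])

lemma finitely_based_fle_r_Mt:
  fixes X :: "'a set"
  assumes "finite X" "lat_gen X = UNIV" "finite P" and PL: "partial_lattice P jn mt"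
    and d: "set_lterm d1 \<subseteq> P" "set_lterm d2 \<subseteq> P"
    and based: "finitely_based (\<lambda>x. fle P jn mt d1 (r x))" "finitely_based (\<lambda>x. fle P jn mt d2 (r x))"
      "\<forall>p\<in>P. finitely_based (\<lambda>x. fle P jn mt (Gen p) (r x))"
  shows "finitely_based (\<lambda>x. fle P jn mt (Mt d1 d2) (r x))"
proof -
  obtain Y1 Y2 where
    Y1: "finite Y1" "\<forall>x. fle P jn mt d1 (r x) \<longrightarrow> (\<exists>y\<in>Y1. y \<le> x \<and> fle P jn mt d1 (r y))" and
    Y2: "finite Y2" "\<forall>x. fle P jn mt d2 (r x) \<longrightarrow> (\<exists>y\<in>Y2. y \<le> x \<and> fle P jn mt d2 (r y))"
    using based(1,2) unfolding finitely_based_def by blast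
  obtain YP where YP: "\<forall>p\<in>P. finite (YP p) \<and>
      (\<forall>x. fle P jn mt (Gen p) (r x) \<longrightarrow> (\<exists>y\<in>YP p. y \<le> x \<and> fle P jn mt (Gen p) (r y)))"
    using based(3) unfolding finitely_based_def by metis
  define B where "B = X \<union> Y1 \<union> Y2 \<union> (\<Union>p\<in>P. YP p)"
  have B: "X \<subseteq> B" "Y1 \<subseteq> B" "Y2 \<subseteq> B" "\<And>p. p \<in> P \<Longrightarrow> YP p \<subseteq> B"
    unfolding B_def by auto
  let ?Q = "\<lambda>x. fle P jn mt (Mt d1 d2) (r x)"
  have below: "\<exists>b\<in>B. b \<le> z \<and> ?Q b"
    if z: "fle P jn mt e (r z)" and e: "fle P jn mt (Mt d1 d2) e"
      and Y: "\<forall>x. fle P jn mt e (r x) \<longrightarrow> (\<exists>y\<in>Y. y \<le> x \<and> fle P jn mt e (r y))" "Y \<subseteq> B" for e z Y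
  proof -
    obtain y where "y \<in> Y" "y \<le> z" "fle P jn mt e (r y)" using z Y(1) by blast
    then show ?thesis using Y(2) fle.trans[OF e] by blast
  qed
  have "?Q x \<or> ?Q y \<or> (\<exists>b\<in>B. b \<le> sup x y \<and> ?Q b)" if "?Q (sup x y)" for x y
  proof -
    have "fle P jn mt (Mt d1 d2) (Jn (r x) (r y))" using that by (rule fle_r_sup)
    from fle_Mt_Jn_dean[OF PL d r_in r_in this]
    consider "fle P jn mt d1 (r (sup x y))" | "fle P jn mt d2 (r (sup x y))" | "?Q x" | "?Q y"
      | p where "p \<in> P" "fle P jn mt (Mt d1 d2) (Gen p)" "fle P jn mt (Gen p) (r (sup x y))"
      using fle.trans[OF _ r_sup(2)] by blast
    then show ?thesis
    proof cases
      case 1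
      then show ?thesis using below[OF 1 fle.mt_lower1[OF d] Y1(2) B(2)] by blast
    next
      case 2
      then show ?thesis using below[OF 2 fle.mt_lower2[OF d] Y2(2) B(3)] by blast
    next
      case 5
      then show ?thesis using below[OF 5(3,2) _ B(4)[OF 5(1)]] YP 5(1) by blast
    qed simp_all
  qed
  moreover have "finite B" unfolding B_def using assms(1,3) Y1(1) Y2(1) YP by simp
  ultimately show ?thesis
    using finitely_based_if_join_split[OF assms(2) _ B(1) mono_fle_r fle_r_inf] by blast
qed

lemma finitely_based_fle_r:
  fixes X :: "'a set"
  assumes "finite X" "lat_gen X = UNIV" "finite P" "partial_lattice P jn mt"
    and gen: "\<forall>p\<in>P. has_least_or_empty (\<lambda>x. fle P jn mt (Gen p) (r x))"
  shows "set_lterm d \<subseteq> P \<Longrightarrow> finitely_based (\<lambda>x. fle P jn mt d (r x))"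
proof (induction d)
  case (Gen p)
  then show ?case using gen by (simp add: finitely_based_if_has_least_or_empty)
next
  case (Jn d1 d2)
  then have "finitely_based (\<lambda>x. fle P jn mt d1 (r x) \<and> fle P jn mt d2 (r x))"
    by (intro finitely_based_conj mono_fle_r) simp_all
  then show ?case using Jn.prems by (simp add: fle_Jn_left_iff)
next
  case (Mt d1 d2)
  then show ?case
    using finitely_based_fle_r_Mt[OF assms(1-4)] gen by (simp add: finitely_based_if_has_least_or_empty)
qed

end

lemma FL_hom_representatives:
  assumes "FL_hom P jn mt g"
  obtains r where "fle_hom P jn mt r" "\<And>x. g x = fcls P jn mt (r x)"
proof -
  have "\<exists>s. set_lterm s \<subseteq> P \<and> g x = fcls P jn mt s" for x
  proof -
    have "g x \<in> FC P jn mt" using assms unfolding FL_hom_def by blast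
    then obtain s where "set_lterm s \<subseteq> P" "g x = fcls P jn mt s" by (rule FC_cases)
    then show ?thesis by blast
  qed
  then obtain r where r: "\<And>x. set_lterm (r x) \<subseteq> P" "\<And>x. g x = fcls P jn mt (r x)" by metis
  have "fcls P jn mt (r (sup x y)) = fcls P jn mt (Jn (r x) (r y))" for x y
    using assms r FSup_pair_fcls[of "r x" P "r y" jn mt] unfolding FL_hom_def by metis
  moreover have "fcls P jn mt (r (inf x y)) = fcls P jn mt (Mt (r x) (r y))" for x y
    using assms r FInf_pair_fcls[of "r x" P "r y" jn mt] unfolding FL_hom_def by metis
  ultimately have "fle_hom P jn mt r"
    unfolding fle_hom_def using r(1) by (simp add: fcls_eq_iff)
  then show ?thesis using r(2) that by blast
qed

lemma lower_bounded_if_generators: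
  fixes X :: "'a::lattice set" and g :: "'a \<Rightarrow> 'p lterm set"
  assumes "finite X" "lat_gen X = UNIV" "finite P" "partial_lattice P jn mt" "FL_hom P jn mt g"
    and gen: "\<forall>p\<in>P. has_least_or_empty (\<lambda>x. FLe P jn mt (FGen P jn mt p) (g x))"
  shows "lower_bounded g (FC P jn mt) (FLe P jn mt)"
  unfolding lower_bounded_iff_has_least_or_empty
proof
  obtain r where r: "fle_hom P jn mt r" "\<And>x. g x = fcls P jn mt (r x)"
    using FL_hom_representatives[OF assms(5)] by blast
  have FLe_g: "FLe P jn mt (fcls P jn mt t) (g x) \<longleftrightarrow> fle P jn mt t (r x)" if "set_lterm t \<subseteq> P" for t x
    using that r fle_hom.r_in[OF r(1)] by (simp add: FLe_fcls_iff)
  fix c assume "c \<in> FC P jn mt"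
  then obtain t where t: "set_lterm t \<subseteq> P" "c = fcls P jn mt t" by (rule FC_cases)
  have "\<forall>p\<in>P. has_least_or_empty (\<lambda>x. fle P jn mt (Gen p) (r x))"
    using gen FLe_g[of "Gen _"] by (simp add: FGen_def)
  then have "finitely_based (\<lambda>x. fle P jn mt t (r x))"
    using fle_hom.finitely_based_fle_r[OF r(1) assms(1-4)] t(1) by blast
  then have "has_least_or_empty (\<lambda>x. fle P jn mt t (r x))"
    using fle_hom.fle_r_inf[OF r(1)] by (rule has_least_or_empty_if_finitely_based)
  then show "has_least_or_empty (\<lambda>x. FLe P jn mt c (g x))" using t FLe_g by simp
qed

theorem mainTheorem14:
  fixes X :: "'a::lattice set"
    and P :: "'p set" and jn mt :: "'p set \<Rightarrow> 'p \<Rightarrow> bool"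
    and n :: nat and g :: "'a \<Rightarrow> 'p lterm set"
  assumes "finite X" and "lat_gen X = UNIV"
    and "finite P" and "partial_lattice P jn mt"
    and "FL_hom P jn mt g"
    and "dean_FL P jn mt (range g) (g ` X)"
    and "g ` X \<subseteq> Sn P jn mt n"
  shows "lower_bounded g (FC P jn mt) (FLe P jn mt) \<longleftrightarrow>
         lower_bounded (std_hom P jn mt (Sn P jn mt n) \<circ> g) (Sn P jn mt n) (FLe P jn mt)"
proof -
  let ?S = "Sn P jn mt n"
  have gFC: "g x \<in> FC P jn mt" for x using assms(5) unfolding FL_hom_def by blast
  obtain s where "set_lterm s \<subseteq> P" using gFC by (rule FC_cases)
  then have "P \<noteq> {}" using set_lterm_nonempty[of s] by blast
  then have S: "finite ?S" "?S \<subseteq> FC P jn mt" "FGen P jn mt ` P \<subseteq> ?S"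
    using Sn_props[OF assms(3)] by auto
  have comp: "FLe P jn mt d ((std_hom P jn mt ?S \<circ> g) x) \<longleftrightarrow> FLe P jn mt d (g x)" if "d \<in> ?S" for d x
    using FLe_std_hom_iff[OF assms(3) \<open>P \<noteq> {}\<close> S(1,2) that gFC] by simp
  show ?thesis
  proof
    assume "lower_bounded g (FC P jn mt) (FLe P jn mt)"
    then show "lower_bounded (std_hom P jn mt ?S \<circ> g) ?S (FLe P jn mt)"
      using S(2) comp unfolding lower_bounded_iff_has_least_or_empty by auto
  next
    assume "lower_bounded (std_hom P jn mt ?S \<circ> g) ?S (FLe P jn mt)"
    then have "\<forall>p\<in>P. has_least_or_empty (\<lambda>x. FLe P jn mt (FGen P jn mt p) (g x))"
      using S(3) comp unfolding lower_bounded_iff_has_least_or_empty by auto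
    then show "lower_bounded g (FC P jn mt) (FLe P jn mt)"
      using lower_bounded_if_generators[OF assms(1-5)] by blast
  qed
qed

end
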